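(* Let $K_1, K_2, K_3, K_4$ be closed subsets of standard simplices, and let $R_f \subseteq K_1 \times K_2$, $R_g \subseteq K_1 \times K_3$, $R_{g'} \subseteq K_2 \times K_4$, $R_{f'} \subseteq K_3 \times K_4$ be closed relations with $R_{f'} \circ R_g = R_{g'} \circ R_f$ (relational composition). Let $u_4: K_4 \to \mathbb{R}$ be continuous and strictly concave, and define $$u_2(y) = \max\{u_4(w) : (y,w) \in R_{g'}\}, \qquad u_3(z) = \max\{u_4(w) : (z,w) \in R_{f'}\}.$$ Define $f, g, g', f'$ as the unique optimizers $$f(x) = \arg\max_{(x,y) \in R_f} u_2(y),\quad g(x) = \arg\max_{(x,z) \in R_g} u_3(z),\quad g'(y) = \arg\max_{(y,w) \in R_{g'}} u_4(w),\quad f'(z) = \arg\max_{(z,w) \in R_{f'}} u_4(w)$$ (assuming these maxima exist and are attained uniquely, so that these are well-defined maps). Assume that for every $x \in K_1$ the set $W_x = \{w \in K_4 : (x,w) \in R_{f'} \circ R_g\}$ is non-empty and convex. Then $f' \circ g = g' \circ f$.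
   Context: Relational composition: $S \circ R = \{(a,c) : \exists b,\ (a,b) \in R,\ (b,c) \in S\}$. Strict concavity of $u_4$ presupposes that $K_4$ is convex. *)

theory Defs
  imports "HOL-Analysis.Analysis"
begin

definition std_simplex :: "(real ^ 'n) set" where
  "std_simplex = {x. (\<forall>i. 0 \<le> x $ i) \<and> (\<Sum>i\<in>UNIV. x $ i) = 1}"

definition strictly_concave_on :: "'a::real_vector set \<Rightarrow> ('a \<Rightarrow> real) \<Rightarrow> bool" where
  "strictly_concave_on K u \<longleftrightarrow> convex K \<and>
     (\<forall>x\<in>K. \<forall>y\<in>K. \<forall>t::real. x \<noteq> y \<and> 0 < t \<and> t < 1 \<longrightarrow>
        t * u x + (1 - t) * u y < u (t *\<^sub>R x + (1 - t) *\<^sub>R y))"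

definition fiber :: "('a \<times> 'b) set \<Rightarrow> 'a \<Rightarrow> 'b set" where
  "fiber R x = {y. (x, y) \<in> R}"

text \<open>Value of the maximum of u over S (equals max u(S) when attained).\<close>
definition max_val :: "('a \<Rightarrow> real) \<Rightarrow> 'a set \<Rightarrow> real" where
  "max_val u S = Sup (u ` S)"

definition is_argmax_on :: "('a \<Rightarrow> real) \<Rightarrow> 'a set \<Rightarrow> 'a \<Rightarrow> bool" where
  "is_argmax_on u S w \<longleftrightarrow> w \<in> S \<and> (\<forall>v\<in>S. u v \<le> u w)"

definition is_unique_argmax_on :: "('a \<Rightarrow> real) \<Rightarrow> 'a set \<Rightarrow> 'a \<Rightarrow> bool" where
  "is_unique_argmax_on u S w \<longleftrightarrow> is_argmax_on u S w \<and> (\<forall>v. is_argmax_on u S v \<longrightarrow> v = w)"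

end

theory Submission
  imports Defs
begin

text \<open>Both f' (g x) and g' (f x) maximize u4 over W_x: maximizing first over R_g and then
  over R_f' (resp. R_f, then R_g') maximizes over the composite relation, and the two composites
  agree. A strictly concave function has at most one maximizer on a convex set.
  The closedness, continuity and simplex hypotheses only serve to make the maxima exist, which
  the hypotheses on f, g, f', g' already provide.\<close>

lemma max_val_eq_argmax:
  assumes "is_argmax_on u S w"
  shows "max_val u S = u w"
  using assms unfolding max_val_def is_argmax_on_def
  by (intro cSup_eq_maximum) auto

lemma is_argmax_on_fiber_relcomp:
  assumes inner: "\<forall>b\<in>fiber R a. is_argmax_on u (fiber S b) (h b)"
    and outer: "is_argmax_on (\<lambda>b. max_val u (fiber S b)) (fiber R a) b\<^sub>0"
  shows "is_argmax_on u (fiber (R O S) a) (h b\<^sub>0)"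
  unfolding is_argmax_on_def
proof (intro conjI ballI)
  have b\<^sub>0: "b\<^sub>0 \<in> fiber R a" and h_b\<^sub>0: "is_argmax_on u (fiber S b\<^sub>0) (h b\<^sub>0)"
    using outer inner unfolding is_argmax_on_def by auto
  then show "h b\<^sub>0 \<in> fiber (R O S) a"
    unfolding is_argmax_on_def fiber_def by auto
  fix w assume "w \<in> fiber (R O S) a"
  then obtain b where b: "b \<in> fiber R a" and w: "w \<in> fiber S b"
    unfolding fiber_def by auto
  have h_b: "is_argmax_on u (fiber S b) (h b)"
    using inner b by blast
  have "u w \<le> u (h b)"
    using h_b w unfolding is_argmax_on_def by blast
  also have "\<dots> = max_val u (fiber S b)"
    using max_val_eq_argmax[OF h_b] by simp
  also have "\<dots> \<le> max_val u (fiber S b\<^sub>0)"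
    using outer b unfolding is_argmax_on_def by blast
  also have "\<dots> = u (h b\<^sub>0)"
    using max_val_eq_argmax[OF h_b\<^sub>0] .
  finally show "u w \<le> u (h b\<^sub>0)" .
qed

lemma strictly_concave_on_argmax_unique:
  assumes conc: "strictly_concave_on K u" and "convex W" "W \<subseteq> K"
    and a: "is_argmax_on u W a" and b: "is_argmax_on u W b"
  shows "a = b"
proof (rule ccontr)
  assume "a \<noteq> b"
  define m where "m = (1/2::real) *\<^sub>R a + (1 - 1/2) *\<^sub>R b"
  have "a \<in> W" "b \<in> W"
    using a b unfolding is_argmax_on_def by auto
  then have "m \<in> W"
    unfolding m_def using \<open>convex W\<close> by (intro convexD) auto
  have "u a = u b"
    using a b \<open>a \<in> W\<close> \<open>b \<in> W\<close> unfolding is_argmax_on_def by (meson order_antisym)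
  moreover have "(1/2) * u a + (1 - 1/2) * u b < u m"
  proof -
    have strict: "\<forall>x\<in>K. \<forall>y\<in>K. \<forall>t::real. x \<noteq> y \<and> 0 < t \<and> t < 1 \<longrightarrow>
        t * u x + (1 - t) * u y < u (t *\<^sub>R x + (1 - t) *\<^sub>R y)"
      using conc unfolding strictly_concave_on_def by blast
    have "a \<in> K" "b \<in> K"
      using \<open>a \<in> W\<close> \<open>b \<in> W\<close> \<open>W \<subseteq> K\<close> by auto
    then show ?thesis
      unfolding m_def using strict[rule_format, of a b "1/2"] \<open>a \<noteq> b\<close> by simp
  qed
  moreover have "u m \<le> u a"
    using a \<open>m \<in> W\<close> unfolding is_argmax_on_def by blast
  ultimately show False by simp
qed

theorem mainTheorem13:
  fixes K1 :: "(real ^ 'n1) set" and K2 :: "(real ^ 'n2) set"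
    and K3 :: "(real ^ 'n3) set" and K4 :: "(real ^ 'n4) set"
    and Rf :: "((real ^ 'n1) \<times> (real ^ 'n2)) set"
    and Rg :: "((real ^ 'n1) \<times> (real ^ 'n3)) set"
    and Rg' :: "((real ^ 'n2) \<times> (real ^ 'n4)) set"
    and Rf' :: "((real ^ 'n3) \<times> (real ^ 'n4)) set"
    and u4 :: "real ^ 'n4 \<Rightarrow> real"
    and f :: "real ^ 'n1 \<Rightarrow> real ^ 'n2" and g :: "real ^ 'n1 \<Rightarrow> real ^ 'n3"
    and g' :: "real ^ 'n2 \<Rightarrow> real ^ 'n4" and f' :: "real ^ 'n3 \<Rightarrow> real ^ 'n4"
  assumes K1: "closed K1" "K1 \<subseteq> std_simplex"
    and K2: "closed K2" "K2 \<subseteq> std_simplex"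
    and K3: "closed K3" "K3 \<subseteq> std_simplex"
    and K4: "closed K4" "K4 \<subseteq> std_simplex"
    and Rf: "closed Rf" "Rf \<subseteq> K1 \<times> K2"
    and Rg: "closed Rg" "Rg \<subseteq> K1 \<times> K3"
    and Rg': "closed Rg'" "Rg' \<subseteq> K2 \<times> K4"
    and Rf': "closed Rf'" "Rf' \<subseteq> K3 \<times> K4"
    and comm: "Rg O Rf' = Rf O Rg'"
    and u4_cont: "continuous_on K4 u4"
    and u4_conc: "strictly_concave_on K4 u4"
    and g'_def: "\<forall>y\<in>K2. is_unique_argmax_on u4 (fiber Rg' y) (g' y)"
    and f'_def: "\<forall>z\<in>K3. is_unique_argmax_on u4 (fiber Rf' z) (f' z)"
    and f_def: "\<forall>x\<in>K1. is_unique_argmax_on (\<lambda>y. max_val u4 (fiber Rg' y)) (fiber Rf x) (f x)"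
    and g_def: "\<forall>x\<in>K1. is_unique_argmax_on (\<lambda>z. max_val u4 (fiber Rf' z)) (fiber Rg x) (g x)"
    and W: "\<forall>x\<in>K1. fiber (Rg O Rf') x \<noteq> {} \<and> convex (fiber (Rg O Rf') x)"
  shows "\<forall>x\<in>K1. f' (g x) = g' (f x)"
proof
  fix x assume x: "x \<in> K1"
  have "is_argmax_on u4 (fiber (Rg O Rf') x) (f' (g x))"
  proof (rule is_argmax_on_fiber_relcomp)
    show "\<forall>z\<in>fiber Rg x. is_argmax_on u4 (fiber Rf' z) (f' z)"
      using f'_def Rg(2) unfolding is_unique_argmax_on_def fiber_def by blast
  qed (use g_def x in \<open>simp add: is_unique_argmax_on_def\<close>)
  moreover have "is_argmax_on u4 (fiber (Rg O Rf') x) (g' (f x))"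
    unfolding comm
  proof (rule is_argmax_on_fiber_relcomp)
    show "\<forall>y\<in>fiber Rf x. is_argmax_on u4 (fiber Rg' y) (g' y)"
      using g'_def Rf(2) unfolding is_unique_argmax_on_def fiber_def by blast
  qed (use f_def x in \<open>simp add: is_unique_argmax_on_def\<close>)
  moreover have "fiber (Rg O Rf') x \<subseteq> K4"
    using Rf'(2) unfolding fiber_def by auto
  ultimately show "f' (g x) = g' (f x)"
    using W x by (intro strictly_concave_on_argmax_unique[OF u4_conc]) auto
qed

end
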